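(* For every integer $n\geq2$, \[\left(\zeta_{p^{n+1}}-1\right)^{-2p+2}=p^{-\frac{2}{p^n}}\left(1-(-1)^n\zeta_{2(p-1)}p^{\frac{1}{p^n(p-1)}}-\mathds{1}_3(p)\cdot 3^{\frac{2}{3^n\cdot 2}}\sigma_{n+1}+O\!\left(p^{\frac{2}{p^n(p-1)}}\right)\right),\] where $\mathds{1}_3(p)=1$ if $p=3$ and $0$ otherwise.
   Context: $p\geq 3$ is a prime. $\mathbb{L}_p=W(\bar{\mathbb{F}}_p)((p^{\mathbb{Q}}))$ is the $p$-adic Mal'cev–Neumann field: each element is uniquely $\sum_{x\in\mathbb{Q}}[\alpha_x]p^x$ with $\alpha_x\in\bar{\mathbb{F}}_p$, $[\cdot]$ the Teichmüller lift, and well-ordered support; it is an algebraically closed complete field with valuation $v_p(\alpha)=\min$ of the support ($v_p(p)=1$), and $\bar{\mathbb{Q}}_p$ is regarded as a subfield via a fixed continuous embedding. For $x\in\mathbb{Q}$, $p^x$ denotes $[1]p^x$ (and likewise $3^x$ when $p=3$). For $r\in\mathbb{Q}$, "$\alpha=\beta+O(p^r)$" means $v_p(\alpha-\beta)\geq r$; an expression $c\,(\cdots+O(p^r))$ means $c$ times an element of that form. $H_k=\sum_{i=1}^k1/i$. For $n\geq1$, $\sigma_n=\sum_{k=n}^{\infty}p^{-1/p^k}\in\mathbb{L}_p$. Fix a primitive $2(p-1)$-th root of unity $\zeta_{2(p-1)}\in W(\bar{\mathbb{F}}_p)$ and a system $(\zeta_{p^n})_{n\geq1}$ of primitive $p^n$-th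 roots of unity in $\mathbb{L}_p$ with $\zeta_{p^{n+1}}^p=\zeta_{p^n}$, normalized (as established in earlier work of the authors) so that for every $n\geq2$, writing $\zeta=\zeta_{2(p-1)}$, \[\zeta_{p^n}=\sum_{k=0}^{p-1}\frac{(-1)^{nk}}{k!}\zeta^k p^{\frac{k}{p^{n-1}(p-1)}}+\sum_{k=0}^{p-1}\frac{(-1)^{n(k+1)}}{k!}\zeta^{k+1}p^{\frac{k+p}{p^{n-1}(p-1)}}\sigma_n-\sum_{k=1}^{p-1}\frac{H_k}{k!}(-1)^{n(k+1)}\zeta^{k+1}p^{\frac{k+p}{p^{n-1}(p-1)}}+\frac12\zeta^2p^{\frac{2}{p^{n-2}(p-1)}}\sigma_n^2+\frac{(-1)^n}{2}\zeta^3p^{\frac{2}{p^{n-2}(p-1)}-\frac{p-2}{p^n(p-1)}}+O\!\left(p^{\frac{2}{p^{n-2}(p-1)}}\right).\] *)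

theory Defs
  imports Complex_Main "HOL-Computational_Algebra.Polynomial"
begin

text \<open>Abstract rendering of the p-adic Mal'cev--Neumann field L_p: a field 'a of
characteristic 0 carrying a Q-valued (rank one) valuation v (v is only meaningful on
nonzero elements; v 0 is irrelevant), together with the monomials p^x, x in Q.\<close>

definition nonarch_valuation :: "('a::field \<Rightarrow> rat) \<Rightarrow> bool" where
  "nonarch_valuation v \<longleftrightarrow>
     (\<forall>x y. x \<noteq> 0 \<longrightarrow> y \<noteq> 0 \<longrightarrow> v (x * y) = v x + v y) \<and>
     (\<forall>x y. x \<noteq> 0 \<longrightarrow> y \<noteq> 0 \<longrightarrow> x + y \<noteq> 0 \<longrightarrow> min (v x) (v y) \<le> v (x + y))"

text \<open>"alpha = O(p^r)": v(alpha) >= r (the zero element has valuation +infinity).\<close>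
definition bigO :: "('a::field \<Rightarrow> rat) \<Rightarrow> rat \<Rightarrow> 'a \<Rightarrow> bool" where
  "bigO v r x \<longleftrightarrow> x = 0 \<or> r \<le> v x"

definition alg_closed_field :: "'a::field itself \<Rightarrow> bool" where
  "alg_closed_field _ \<longleftrightarrow> (\<forall>f :: 'a poly. 0 < degree f \<longrightarrow> (\<exists>x. poly f x = 0))"

definition v_complete :: "('a::field \<Rightarrow> rat) \<Rightarrow> bool" where
  "v_complete v \<longleftrightarrow>
     (\<forall>s :: nat \<Rightarrow> 'a. (\<forall>B. \<exists>N. \<forall>m\<ge>N. \<forall>k\<ge>N. bigO v B (s m - s k)) \<longrightarrow>
        (\<exists>L. \<forall>B. \<exists>N. \<forall>m\<ge>N. bigO v B (s m - L)))"

definition primitive_root :: "nat \<Rightarrow> 'a::field \<Rightarrow> bool" where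
  "primitive_root m z \<longleftrightarrow> z ^ m = 1 \<and> (\<forall>k. 0 < k \<and> k < m \<longrightarrow> z ^ k \<noteq> 1)"

definition harm :: "nat \<Rightarrow> 'a::field" where
  "harm k = (\<Sum>i=1..k. 1 / of_nat i)"

definition zeta_expansion ::
  "('a::field \<Rightarrow> rat) \<Rightarrow> (rat \<Rightarrow> 'a) \<Rightarrow> nat \<Rightarrow> 'a \<Rightarrow> 'a \<Rightarrow> nat \<Rightarrow> 'a \<Rightarrow> bool" where
  "zeta_expansion v pp p \<zeta> s n z \<longleftrightarrow>
     (let q = (of_nat p :: rat);
          e = 1 / (q ^ (n - 1) * (q - 1));
          r = 2 / (q ^ (n - 2) * (q - 1))
      in bigO v r
        (z - ((\<Sum>k=0..p-1. ((-1) ^ (n * k) / of_nat (fact k)) * \<zeta> ^ k * pp (of_nat k * e))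
            + (\<Sum>k=0..p-1. ((-1) ^ (n * (k + 1)) / of_nat (fact k)) * \<zeta> ^ (k + 1)
                  * pp ((of_nat k + q) * e) * s)
            - (\<Sum>k=1..p-1. (harm k / of_nat (fact k)) * (-1) ^ (n * (k + 1)) * \<zeta> ^ (k + 1)
                  * pp ((of_nat k + q) * e))
            + (1 / 2) * \<zeta> ^ 2 * pp r * s ^ 2
            + ((-1) ^ n / 2) * \<zeta> ^ 3 * pp (r - (q - 2) / (q ^ n * (q - 1))))))"

end

theory Submission
  imports Defs "HOL-Computational_Algebra.Primes"
begin

(* Write e = 1/(p^n (p - 1)) and T = (-1)^(n+1) zeta p^e.  Read at level n + 1, the normalization
   of zeta_{p^(n+1)} says zeta_{p^(n+1)} - 1 = T (1 + T/2 + d) + O(p^(3e)), where d = p^(2e) sigma_(n+1)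
   if p = 3 and d = 0 otherwise: every other term has valuation at least 3e, because its coefficient
   (a sign, a power of zeta, 1/k! or H_k/k! with k < p) is p-adically integral.  Hence
   (zeta_{p^(n+1)} - 1)^(-m) = T^(-m) (1 - m (T/2 + d) + O(p^(2e))) for every m, by the binomial
   expansion of (1 + u)^(-m) with v(u) >= e.  For m = 2p - 2 we get T^(-m) = p^(-2/p^n), and
   1 - (p - 1) T - (2p - 2) d = (1 + T - d) - p T - p d, where p T and p d are O(p^(2e))
   because v(p) = 1 >= e. *)

locale nonarch_valued_field =
  fixes v :: "'a::field \<Rightarrow> rat"
  assumes nonarch_valuation: "nonarch_valuation v"
begin

lemma v_mult: "x \<noteq> 0 \<Longrightarrow> y \<noteq> 0 \<Longrightarrow> v (x * y) = v x + v y"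
  using nonarch_valuation unfolding nonarch_valuation_def by blast

lemma v_add_ge_min: "x \<noteq> 0 \<Longrightarrow> y \<noteq> 0 \<Longrightarrow> x + y \<noteq> 0 \<Longrightarrow> min (v x) (v y) \<le> v (x + y)"
  using nonarch_valuation unfolding nonarch_valuation_def by blast

lemma v_one [simp]: "v 1 = 0"
  using v_mult[of 1 1] by simp

lemma v_minus_one [simp]: "v (- 1) = 0"
  using v_mult[of "- 1" "- 1"] by simp

lemma v_uminus [simp]: "v (- x) = v x"
  by (cases "x = 0") (use v_mult[of "- 1" x] in auto)

lemma v_inverse: "x \<noteq> 0 \<Longrightarrow> v (inverse x) = - v x"
  using v_mult[of x "inverse x"] by simp

lemma v_power: "x \<noteq> 0 \<Longrightarrow> v (x ^ k) = of_nat k * v x"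
  by (induction k) (auto simp: v_mult algebra_simps)

lemma v_root_of_unity: assumes "x ^ m = 1" "0 < m" shows "v x = 0"
proof -
  have "x \<noteq> 0" using assms by (metis power_0_left zero_neq_one gr_implies_not0)
  then have "of_nat m * v x = 0" using v_power[of x m] assms(1) by simp
  then show ?thesis using assms(2) by simp
qed

lemma bigO_0 [simp]: "bigO v r 0"
  by (simp add: bigO_def)

lemma bigO_v: "bigO v (v x) x"
  by (simp add: bigO_def)

lemma bigO_mono: "bigO v r x \<Longrightarrow> s \<le> r \<Longrightarrow> bigO v s x"
  unfolding bigO_def by auto

lemma bigO_add: assumes "bigO v r x" "bigO v r y" shows "bigO v r (x + y)"
proof (cases "x = 0 \<or> y = 0 \<or> x + y = 0")
  case False
  then have "min (v x) (v y) \<le> v (x + y)" by (intro v_add_ge_min) auto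
  then show ?thesis using assms False by (auto simp: bigO_def)
qed (use assms in auto)

lemma bigO_uminus: "bigO v r x \<Longrightarrow> bigO v r (- x)"
  by (simp add: bigO_def)

lemma bigO_diff: "bigO v r x \<Longrightarrow> bigO v r y \<Longrightarrow> bigO v r (x - y)"
  using bigO_add[of r x "- y"] bigO_uminus[of r y] by simp

lemma bigO_mult: "bigO v r x \<Longrightarrow> bigO v s y \<Longrightarrow> bigO v (r + s) (x * y)"
  by (cases "x = 0"; cases "y = 0") (auto simp: bigO_def v_mult)

lemma bigO_mult_le: "bigO v r x \<Longrightarrow> bigO v s y \<Longrightarrow> t \<le> r + s \<Longrightarrow> bigO v t (x * y)"
  using bigO_mult bigO_mono by blast

lemma bigO_sum: "(\<And>i. i \<in> A \<Longrightarrow> bigO v r (f i)) \<Longrightarrow> bigO v r (sum f A)"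
  by (induction A rule: infinite_finite_induct) (auto intro: bigO_add)

lemma bigO_power: "bigO v r x \<Longrightarrow> bigO v (of_nat k * r) (x ^ k)"
proof (induction k)
  case (Suc k)
  then show ?case using bigO_mult[of r x "of_nat k * r" "x ^ k"] by (simp add: algebra_simps)
qed (simp add: bigO_def)

lemma bigO_inverse: "bigO v (- v x) (inverse x)"
  by (cases "x = 0") (auto simp: bigO_def v_inverse)

lemma integral_one: "bigO v 0 1"
  by (simp add: bigO_def)

lemma integral_mult: "bigO v 0 x \<Longrightarrow> bigO v 0 y \<Longrightarrow> bigO v 0 (x * y)"
  using bigO_mult[of 0 x 0 y] by simp

lemma integral_power: "bigO v 0 x \<Longrightarrow> bigO v 0 (x ^ k)"
  using bigO_power[of 0 x k] by simp

lemma integral_minus_one_power: "bigO v 0 ((- 1) ^ k)"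
  by (simp add: bigO_def v_power)

lemma integral_of_nat: "bigO v 0 (of_nat k)"
  by (induction k) (auto intro: bigO_add integral_one)

lemma integral_of_int: "bigO v 0 (of_int k)"
  using integral_of_nat[of "nat k"] bigO_uminus[OF integral_of_nat[of "nat (- k)"]]
  by (cases "0 \<le> k") auto

lemma unit_one_plus:
  assumes "bigO v t u" "0 < t"
  shows "1 + u \<noteq> 0" and "v (1 + u) = 0"
proof -
  show "1 + u \<noteq> 0"
    using assms by (auto simp: bigO_def add_eq_0_iff)
  have "bigO v 0 (1 + u)"
    using assms by (intro bigO_add integral_one) (auto elim: bigO_mono)
  moreover have "\<not> 0 < v (1 + u)"
  proof
    assume "0 < v (1 + u)"
    then have "bigO v (min t (v (1 + u))) ((1 + u) - u)"
      using assms by (intro bigO_diff) (auto simp: bigO_def)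
    then show False using assms \<open>0 < v (1 + u)\<close> by (simp add: bigO_def)
  qed
  ultimately show "v (1 + u) = 0"
    using \<open>1 + u \<noteq> 0\<close> by (simp add: bigO_def)
qed

lemma bigO_inverse_power_one_plus:
  assumes u: "bigO v t u" and t: "0 < t"
  shows "bigO v (2 * t) (inverse (1 + u) ^ k - 1 + of_nat k * u)"
proof -
  define y where "y = inverse (1 + u)"
  have y_integral: "bigO v 0 y"
    using bigO_inverse[of "1 + u"] unit_one_plus[OF u t] by (simp add: y_def)
  have y_minus_one: "y - 1 = - (u * y)"
    using unit_one_plus(1)[OF u t] by (simp add: y_def field_simps)
  have O_y_minus_one: "bigO v t (y - 1)"
    unfolding y_minus_one using bigO_mult[OF u y_integral] by (simp add: bigO_uminus)
  have O_y_minus_one_plus_u: "bigO v (2 * t) (y - 1 + u)"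
  proof -
    have "y - 1 + u = - (u * (y - 1))" using y_minus_one by (simp add: algebra_simps)
    then show ?thesis
      using bigO_mult_le[OF u O_y_minus_one, of "2 * t"] by (simp add: bigO_uminus)
  qed
  show ?thesis
    unfolding y_def[symmetric]
  proof (induction k)
    case (Suc k)
    have step: "y ^ Suc k - 1 + of_nat (Suc k) * u
        = y * (y ^ k - 1 + of_nat k * u) + (y - 1 + u) - of_nat k * u * (y - 1)"
      by (simp add: algebra_simps)
    have first: "bigO v (2 * t) (y * (y ^ k - 1 + of_nat k * u))"
      using bigO_mult[OF y_integral Suc.IH] by simp
    have last: "bigO v (2 * t) (of_nat k * u * (y - 1))"
      by (rule bigO_mult_le[OF bigO_mult[OF integral_of_nat u] O_y_minus_one]) simp
    show ?case
      unfolding step by (rule bigO_diff[OF bigO_add[OF first O_y_minus_one_plus_u] last])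
  qed simp
qed

lemma inverse_power_expansion:
  assumes T: "T \<noteq> 0" "v T = e" and e: "0 < e" and h: "bigO v e h" and R: "bigO v (3 * e) R"
  shows "\<exists>\<epsilon>. bigO v (2 * e) \<epsilon> \<and>
           inverse (T * (1 + h) + R) ^ m = inverse (T ^ m) * (1 - of_nat m * h + \<epsilon>)"
proof -
  define u where "u = h + R / T"
  have "bigO v (3 * e + - e) (R * inverse T)"
    using bigO_mult[OF R bigO_inverse[of T]] T by simp
  then have R_div_T: "bigO v (2 * e) (R / T)"
    by (simp add: divide_inverse)
  then have "bigO v e u"
    unfolding u_def using h e by (intro bigO_add bigO_mono[OF R_div_T]) auto
  from bigO_inverse_power_one_plus[OF this e, of m]
  have G: "bigO v (2 * e) (inverse (1 + u) ^ m - 1 + of_nat m * u)" .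
  define \<epsilon> where "\<epsilon> = (inverse (1 + u) ^ m - 1 + of_nat m * u) - of_nat m * (R / T)"
  have O_\<epsilon>: "bigO v (2 * e) \<epsilon>"
    unfolding \<epsilon>_def using G bigO_mult[OF integral_of_nat R_div_T, of m]
    by (simp add: bigO_diff)
  have expansion: "inverse (T * (1 + h) + R) ^ m = inverse (T ^ m) * (1 - of_nat m * h + \<epsilon>)"
  proof -
    have "T * (1 + h) + R = T * (1 + u)"
      using T by (simp add: u_def distrib_left)
    then have "inverse (T * (1 + h) + R) ^ m = inverse (T ^ m) * inverse (1 + u) ^ m"
      by (simp only: inverse_mult_distrib power_mult_distrib power_inverse)
    also have "inverse (1 + u) ^ m = 1 - of_nat m * h + \<epsilon>"
    proof -
      have "of_nat m * u = of_nat m * h + of_nat m * (R / T)"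
        by (simp add: u_def distrib_left)
      then show ?thesis by (simp add: \<epsilon>_def)
    qed
    finally show ?thesis .
  qed
  show ?thesis by (intro exI[of _ \<epsilon>] conjI O_\<epsilon> expansion)
qed

end

locale monomial_valued_field = nonarch_valued_field +
  fixes pp :: "rat \<Rightarrow> 'a::field"
  assumes pp_nonzero: "pp x \<noteq> 0"
    and v_pp: "v (pp x) = x"
    and pp_add: "pp (x + y) = pp x * pp y"
begin

lemma pp_0: "pp 0 = 1"
  using pp_add[of 0 0] pp_nonzero[of 0] by simp

lemma pp_uminus: "pp (- x) = inverse (pp x)"
  using pp_add[of x "- x"] pp_nonzero[of x] by (simp add: pp_0 field_simps)

lemma pp_power: "pp x ^ k = pp (of_nat k * x)"
  by (induction k) (simp_all add: pp_0 pp_add[symmetric] algebra_simps)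

lemma bigO_mult_pp: "bigO v s c \<Longrightarrow> r \<le> s + x \<Longrightarrow> bigO v r (c * pp x)"
  using bigO_mult_le[OF _ bigO_v, of s c r "pp x"] by (simp add: v_pp)

end

locale p_valued_field = nonarch_valued_field v for v :: "'a::field_char_0 \<Rightarrow> rat" +
  fixes p :: nat
  assumes prime_p: "prime p"
    and v_p: "v (of_nat p) = 1"
begin

lemma v_of_nat_not_dvd:
  assumes "\<not> p dvd i"
  shows "v (of_nat i) = 0"
proof (rule ccontr)
  assume "v (of_nat i) \<noteq> 0"
  moreover have "of_nat i \<noteq> (0 :: 'a)" using assms by (metis dvd_0_right of_nat_eq_0_iff)
  ultimately have pos: "0 < v (of_nat i)"
    using integral_of_nat[of i] by (simp add: bigO_def)
  have "coprime (int i) (int p)"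
    using prime_imp_coprime[OF prime_p assms] by (simp add: ac_simps)
  then obtain a b where "a * int i + b * int p = 1"
    using bezout_int[of "int i" "int p"] by auto
  then have one: "of_int a * of_nat i + of_int b * of_nat p = (1 :: 'a)"
    by (metis of_int_1 of_int_add of_int_mult of_int_of_nat_eq)
  \<comment> \<open>both summands lie in the maximal ideal, but \<open>1\<close> does not\<close>
  define t where "t = min (v (of_nat i)) 1"
  have "bigO v t (of_int a * of_nat i + of_int b * (of_nat p :: 'a))"
    by (intro bigO_add bigO_mult_le[OF integral_of_int bigO_v]) (simp_all add: t_def v_p)
  then show False
    using pos by (simp add: one bigO_def t_def)
qed

lemma integral_divide_of_nat: "bigO v 0 x \<Longrightarrow> \<not> p dvd i \<Longrightarrow> bigO v 0 (x / of_nat i)"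
  using bigO_mult[OF _ bigO_inverse[of "of_nat i"]] v_of_nat_not_dvd
  by (simp add: divide_inverse)

lemma integral_divide_fact: "bigO v 0 x \<Longrightarrow> k < p \<Longrightarrow> bigO v 0 (x / of_nat (fact k))"
  by (intro integral_divide_of_nat) (simp_all add: prime_dvd_fact_iff prime_p)

lemma integral_harm: "k < p \<Longrightarrow> bigO v 0 (harm k)"
  unfolding harm_def
  by (intro bigO_sum integral_divide_of_nat integral_one) (auto dest: dvd_imp_le)

lemma bigO_mult_p: "bigO v r x \<Longrightarrow> bigO v (1 + r) (of_nat p * x)"
  using bigO_mult[OF bigO_v[of "of_nat p"]] by (simp add: v_p)

end

lemma cyclotomic_exponent_bounds:
  fixes q :: rat and n :: nat
  assumes q: "3 \<le> q"
  defines "e \<equiv> 1 / (q ^ n * (q - 1))"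
  shows "0 < e" and "e \<le> 1" and "1 / q ^ Suc n \<le> e" and "(q - 2) / (q ^ Suc n * (q - 1)) \<le> e"
    and "1 \<le> n \<Longrightarrow> 2 / (q ^ (n - 1) * (q - 1)) = 2 * q * e"
proof -
  have qn: "1 \<le> q ^ n" using q by (simp add: one_le_power)
  show "0 < e" using q qn by (simp add: e_def)
  show "e \<le> 1" using q qn mult_mono[OF qn, of 1 "q - 1"] by (simp add: e_def)
  show w: "1 / q ^ Suc n \<le> e"
    using q qn by (simp add: e_def divide_simps mult_left_mono)
  have "(q - 2) / (q ^ Suc n * (q - 1)) \<le> 1 / q ^ Suc n"
    using q by (simp add: divide_simps)
  with w show "(q - 2) / (q ^ Suc n * (q - 1)) \<le> e" by linarith
  show "2 / (q ^ (n - 1) * (q - 1)) = 2 * q * e" if "1 \<le> n"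
  proof -
    have "q ^ n = q * q ^ (n - 1)" using that by (cases n) auto
    then show ?thesis using q by (simp add: e_def field_simps)
  qed
qed

locale cyclotomic_setting = monomial_valued_field v pp + p_valued_field v p
  for v :: "'a::field_char_0 \<Rightarrow> rat" and pp and p +
  fixes \<zeta> :: 'a
  assumes p_ge_3: "3 \<le> p"
    and zeta_root: "\<zeta> ^ (2 * (p - 1)) = 1"
begin

lemma zeta_nonzero: "\<zeta> \<noteq> 0"
proof
  assume "\<zeta> = 0"
  moreover have "2 * (p - 1) \<noteq> 0" using p_ge_3 by simp
  ultimately show False using zeta_root by (simp add: power_0_left)
qed

lemma v_zeta: "v \<zeta> = 0"
  using v_root_of_unity[OF zeta_root] p_ge_3 by simp

lemma integral_zeta: "bigO v 0 \<zeta>"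
  using bigO_v[of \<zeta>] by (simp add: v_zeta)

lemma bigO_divide_2: assumes "bigO v r x" shows "bigO v r (x / 2)"
proof -
  have "\<not> p dvd 2" using p_ge_3 by (auto dest: dvd_imp_le)
  then have "bigO v 0 (inverse 2)"
    using bigO_inverse[of 2] v_of_nat_not_dvd[of 2] by simp
  from bigO_mult[OF assms this] show ?thesis
    by (simp only: divide_inverse add_0_right)
qed

lemma bigO_zeta_term:
  "k < p \<Longrightarrow> r \<le> x \<Longrightarrow> bigO v r ((- 1) ^ j / of_nat (fact k) * \<zeta> ^ i * pp x)"
  by (rule bigO_mult_pp[of 0], intro integral_mult integral_divide_fact integral_minus_one_power
      integral_power integral_zeta) simp_all

lemma bigO_zeta_harm_term:
  "k < p \<Longrightarrow> r \<le> x \<Longrightarrow> bigO v r (harm k / of_nat (fact k) * (- 1) ^ j * \<zeta> ^ i * pp x)"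
  by (rule bigO_mult_pp[of 0], intro integral_mult integral_divide_fact integral_harm
      integral_minus_one_power integral_power integral_zeta) simp_all

lemma expansion_remainder_bounds:
  assumes e: "0 < e" and w: "w \<le> e" and s: "bigO v (- w) s"
  shows "bigO v (3 * e) (\<Sum>k=3..p-1. (- 1) ^ (N * k) / of_nat (fact k) * \<zeta> ^ k * pp (of_nat k * e))"
    and "bigO v (3 * e) (\<Sum>k=1..p-1. (- 1) ^ (N * (k + 1)) / of_nat (fact k) * \<zeta> ^ (k + 1)
           * pp ((of_nat k + of_nat p) * e) * s)"
    and "bigO v (3 * e) (\<Sum>k=1..p-1. harm k / of_nat (fact k) * (- 1) ^ (N * (k + 1)) * \<zeta> ^ (k + 1)
           * pp ((of_nat k + of_nat p) * e))"
    and "p \<noteq> 3 \<Longrightarrow> bigO v (3 * e) ((- 1) ^ N * \<zeta> * pp (of_nat p * e) * s)"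
    and "bigO v (3 * e) (1 / 2 * \<zeta> ^ 2 * pp (2 * of_nat p * e) * s ^ 2)"
    and "x \<le> e \<Longrightarrow> bigO v (3 * e) ((- 1) ^ N / 2 * \<zeta> ^ 3 * pp (2 * of_nat p * e - x))"
proof -
  have multiple: "of_nat i * e \<le> of_nat j * e" if "i \<le> j" for i j :: nat
    using that e by (intro mult_right_mono) auto
  have six_e: "6 * e \<le> 2 * of_nat p * e"
    using multiple[of 3 p] p_ge_3 by (simp add: algebra_simps)
  show "bigO v (3 * e) (\<Sum>k=3..p-1. (- 1) ^ (N * k) / of_nat (fact k) * \<zeta> ^ k * pp (of_nat k * e))"
    by (intro bigO_sum bigO_zeta_term) (use multiple[of 3] in auto)
  show "bigO v (3 * e) (\<Sum>k=1..p-1. (- 1) ^ (N * (k + 1)) / of_nat (fact k) * \<zeta> ^ (k + 1)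
      * pp ((of_nat k + of_nat p) * e) * s)"
  proof (intro bigO_sum bigO_mult_le[OF bigO_zeta_term s])
    fix k assume "k \<in> {1..p-1}"
    then show "k < p" and "3 * e \<le> (of_nat k + of_nat p) * e + - w"
      using multiple[of 4 "k + p"] w p_ge_3 by auto
  qed simp
  show "bigO v (3 * e) (\<Sum>k=1..p-1. harm k / of_nat (fact k) * (- 1) ^ (N * (k + 1)) * \<zeta> ^ (k + 1)
      * pp ((of_nat k + of_nat p) * e))"
  proof (intro bigO_sum bigO_zeta_harm_term)
    fix k assume "k \<in> {1..p-1}"
    then show "k < p" and "3 * e \<le> (of_nat k + of_nat p) * e"
      using multiple[of 3 "k + p"] p_ge_3 by auto
  qed
  show "bigO v (3 * e) ((- 1) ^ N * \<zeta> * pp (of_nat p * e) * s)" if "p \<noteq> 3"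
  proof -
    have "3 * e \<le> of_nat p * e + - w"
      using that p_ge_3 multiple[of 4 p] w by simp
    then have "bigO v (3 * e) ((- 1) ^ N / of_nat (fact 0) * \<zeta> ^ 1 * pp (of_nat p * e) * s)"
      using p_ge_3 by (intro bigO_mult_le[OF bigO_zeta_term s]) simp_all
    then show ?thesis by simp
  qed
  show "bigO v (3 * e) (1 / 2 * \<zeta> ^ 2 * pp (2 * of_nat p * e) * s ^ 2)"
  proof (rule bigO_mult_le[OF bigO_mult_pp[of 0] bigO_power[OF s, of 2]])
    show "bigO v 0 (1 / 2 * \<zeta> ^ 2)"
      by (intro integral_mult bigO_divide_2 integral_one integral_power integral_zeta)
    show "3 * e \<le> 0 + 2 * of_nat p * e + of_nat 2 * - w"
      using six_e w e by (simp only: of_nat_numeral)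
  qed simp
  show "bigO v (3 * e) ((- 1) ^ N / 2 * \<zeta> ^ 3 * pp (2 * of_nat p * e - x))" if "x \<le> e"
  proof (rule bigO_mult_pp[of 0])
    show "bigO v 0 ((- 1) ^ N / 2 * \<zeta> ^ 3)"
      by (intro integral_mult bigO_divide_2 integral_minus_one_power integral_power integral_zeta)
    show "3 * e \<le> 0 + (2 * of_nat p * e - x)"
      using six_e that e by linarith
  qed
qed

lemma zeta_expansion_leading_terms:
  fixes s z :: 'a
  assumes n: "2 \<le> n" and s: "v s = - 1 / of_nat p ^ Suc n"
    and expansion: "zeta_expansion v pp p \<zeta> s (Suc n) z"
    and e_def: "e = 1 / (of_nat p ^ n * (of_nat p - 1))"
    and T_def: "T = (- 1) ^ Suc n * \<zeta> * pp e"
    and d_def: "d = (if p = 3 then pp (2 * e) * s else 0)"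
  shows "bigO v (3 * e) (z - 1 - T * (1 + (T / 2 + d)))"
proof -
  have "3 \<le> (of_nat p :: rat)" using p_ge_3 by simp
  note exponents = cyclotomic_exponent_bounds[OF this, of n, folded e_def]
  have "bigO v (- (1 / of_nat p ^ Suc n)) s" using bigO_v[of s] s by simp
  note remainder = expansion_remainder_bounds[OF exponents(1) exponents(3) this]
  define a where "a k = (- 1) ^ (Suc n * k) / of_nat (fact k) * \<zeta> ^ k * pp (of_nat k * e)" for k
  define b where "b k = (- 1) ^ (Suc n * (k + 1)) / of_nat (fact k) * \<zeta> ^ (k + 1)
      * pp ((of_nat k + of_nat p) * e) * s" for k
  define c where "c k = harm k / of_nat (fact k) * (- 1) ^ (Suc n * (k + 1)) * \<zeta> ^ (k + 1)
      * pp ((of_nat k + of_nat p) * e)" for k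
  define sq where "sq = 1 / 2 * \<zeta> ^ 2 * pp (2 * of_nat p * e) * s ^ 2"
  define cube where "cube = (- 1) ^ Suc n / 2 * \<zeta> ^ 3
      * pp (2 * of_nat p * e - (of_nat p - 2) / (of_nat p ^ Suc n * (of_nat p - 1)))"
  define R where "R = z - ((\<Sum>k=0..p-1. a k) + (\<Sum>k=0..p-1. b k) - (\<Sum>k=1..p-1. c k) + sq + cube)"
  have "bigO v (2 * of_nat p * e) R"
    using expansion exponents(5) n
    unfolding zeta_expansion_def Let_def a_def b_def c_def sq_def cube_def R_def
    by (simp add: e_def)
  then have O_R: "bigO v (3 * e) R"
    by (rule bigO_mono) (use p_ge_3 exponents(1) in \<open>simp add: mult_right_mono\<close>)
  have O_a: "bigO v (3 * e) (\<Sum>k=3..p-1. a k)"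
    unfolding a_def by (rule remainder(1))
  have O_b: "bigO v (3 * e) (\<Sum>k=1..p-1. b k)"
    unfolding b_def by (rule remainder(2))
  have O_c: "bigO v (3 * e) (\<Sum>k=1..p-1. c k)"
    unfolding c_def by (rule remainder(3))
  have O_sq: "bigO v (3 * e) sq"
    unfolding sq_def by (rule remainder(5))
  have O_cube: "bigO v (3 * e) cube"
    unfolding cube_def by (rule remainder(6)[OF exponents(4)])
  have O_b0: "bigO v (3 * e) (b 0 - T * d)"
  proof (cases "p = 3")
    case True
    then have "pp ((of_nat 0 + of_nat p) * e) = pp e * pp (2 * e)"
      by (simp add: pp_add[symmetric])
    then show ?thesis using True by (simp add: b_def T_def d_def)
  next
    case False
    then have "b 0 - T * d = (- 1) ^ Suc n * \<zeta> * pp (of_nat p * e) * s"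
      by (simp add: b_def d_def)
    then show ?thesis using remainder(4)[OF False, of "Suc n"] by (simp only:)
  qed
  have a_leading: "a 0 = 1" "a (Suc 0) = T" "a 2 = T * (T / 2)"
    using pp_add[of e e] by (simp_all add: a_def T_def pp_0 mult_2 power2_eq_square
      power_mult[symmetric] algebra_simps)
  have "2 \<le> p - 1" using p_ge_3 by simp
  then have "(\<Sum>k=0..p-1. a k) = a 0 + a (Suc 0) + a 2 + (\<Sum>k=3..p-1. a k)"
    and "(\<Sum>k=0..p-1. b k) = b 0 + (\<Sum>k=1..p-1. b k)"
    by (simp_all add: sum.atLeast_Suc_atMost numeral_2_eq_2 numeral_3_eq_3)
  then have "z - 1 - T * (1 + (T / 2 + d))
      = R + (\<Sum>k=3..p-1. a k) + (\<Sum>k=1..p-1. b k) + (b 0 - T * d) - (\<Sum>k=1..p-1. c k) + sq + cube"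
    by (simp add: R_def a_leading algebra_simps)
  then show ?thesis
    by (simp only:) (intro bigO_add bigO_diff O_R O_a O_b O_b0 O_c O_sq O_cube)
qed

lemma leading_monomial_power:
  "((- 1) ^ n * \<zeta> * pp (1 / (of_nat p ^ n * (of_nat p - 1)))) ^ (2 * p - 2) = pp (2 / of_nat p ^ n)"
proof -
  define m where "m = 2 * (p - 1)"
  have "2 * p - 2 = m" by (simp add: m_def)
  moreover have "((- 1) ^ n) ^ m = (- 1 :: 'a) ^ (n * m)" by (rule power_mult[symmetric])
  moreover have "(- 1 :: 'a) ^ (n * m) = 1" by (simp add: m_def)
  moreover have "(of_nat m :: rat) * (1 / (of_nat p ^ n * (of_nat p - 1))) = 2 / of_nat p ^ n"
    using p_ge_3 by (simp add: m_def of_nat_diff field_simps)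
  ultimately show ?thesis
    by (simp add: power_mult_distrib zeta_root[folded m_def] pp_power)
qed

lemma inverse_power_zeta_minus_one:
  fixes s z :: 'a
  assumes n: "2 \<le> n" and s: "v s = - 1 / of_nat p ^ Suc n"
    and expansion: "zeta_expansion v pp p \<zeta> s (Suc n) z"
  shows "\<exists>\<epsilon>. bigO v (2 / (of_nat p ^ n * (of_nat p - 1))) \<epsilon> \<and>
     inverse (z - 1) ^ (2 * p - 2)
       = pp (- 2 / of_nat p ^ n) *
         (1 - (- 1) ^ n * \<zeta> * pp (1 / (of_nat p ^ n * (of_nat p - 1)))
            - (if p = 3 then pp (2 / (3 ^ n * 2)) * s else 0)
            + \<epsilon>)"
proof -
  define e :: rat where "e = 1 / (of_nat p ^ n * (of_nat p - 1))"
  define A where "A = (- 1) ^ n * \<zeta> * pp e"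
  define d where "d = (if p = 3 then pp (2 * e) * s else 0)"
  define m where "m = 2 * p - 2"
  have "3 \<le> (of_nat p :: rat)" using p_ge_3 by simp
  note exponents = cyclotomic_exponent_bounds[OF this, of n, folded e_def]
  have v_A: "v A = e" and A_nonzero: "A \<noteq> 0"
    by (simp_all add: A_def v_mult v_power v_pp pp_nonzero zeta_nonzero v_zeta)
  have O_d: "bigO v e d"
  proof -
    have "bigO v (2 * e + - (1 / of_nat p ^ Suc n)) (pp (2 * e) * s)"
      using bigO_mult[OF bigO_v bigO_v, of "pp (2 * e)" s] s by (simp add: v_pp)
    then have "bigO v e (pp (2 * e) * s)"
      by (rule bigO_mono) (use exponents(3) in simp)
    then show ?thesis by (simp add: d_def)
  qed
  define h where "h = - A / 2 + d"
  have O_h: "bigO v e h"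
    unfolding h_def using bigO_divide_2[OF bigO_v[of "- A"]] O_d by (intro bigO_add) (simp_all add: v_A)
  have "bigO v (3 * e) (z - 1 - (- A) * (1 + h))"
    unfolding h_def
    by (rule zeta_expansion_leading_terms[OF n s expansion e_def _ d_def]) (simp add: A_def)
  from inverse_power_expansion[where T = "- A" and m = m, OF _ _ exponents(1) O_h this] A_nonzero v_A
  obtain \<epsilon> where O_\<epsilon>: "bigO v (2 * e) \<epsilon>"
    and \<epsilon>: "inverse (z - 1) ^ m = inverse ((- A) ^ m) * (1 - of_nat m * h + \<epsilon>)"
    by auto
  have A_power: "inverse ((- A) ^ m) = pp (- 2 / of_nat p ^ n)"
    using leading_monomial_power[of n] by (simp add: A_def e_def m_def pp_uminus)
  have m_eq: "(of_nat m :: 'a) = 2 * of_nat p - 2" using p_ge_3 by (simp add: m_def of_nat_diff)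
  have "of_nat m * h = A - of_nat p * A + 2 * (of_nat p * d) - 2 * d"
    unfolding m_eq h_def by (simp add: field_simps)
  then have "1 - of_nat m * h + \<epsilon> - (1 - A - d + (\<epsilon> + of_nat p * A - of_nat p * d))
      = 3 * d - of_nat p * d"
    by (simp add: algebra_simps)
  \<comment> \<open>\<open>d\<close> vanishes unless \<open>p = 3\<close>\<close>
  also have "3 * d - of_nat p * d = 0" by (simp add: d_def)
  finally have "1 - of_nat m * h + \<epsilon> = 1 - A - d + (\<epsilon> + of_nat p * A - of_nat p * d)"
    by (simp only: right_minus_eq)
  moreover have "bigO v (2 * e) (\<epsilon> + of_nat p * A - of_nat p * d)"
    using bigO_mult_p[OF bigO_v[of A]] bigO_mult_p[OF O_d] exponents(2) v_A
    by (intro bigO_diff bigO_add O_\<epsilon>) (auto elim!: bigO_mono)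
  ultimately show ?thesis
    using \<epsilon> A_power by (intro exI[of _ "\<epsilon> + of_nat p * A - of_nat p * d"])
      (simp add: m_def A_def d_def e_def)
qed

end

theorem proposition2p3:
  fixes v :: "'a::field_char_0 \<Rightarrow> rat"
    and pp :: "rat \<Rightarrow> 'a"
    and p :: nat
    and \<zeta> :: 'a
    and zp :: "nat \<Rightarrow> 'a"
    and \<sigma> :: "nat \<Rightarrow> 'a"
    and n :: nat
  assumes "prime p" and "3 \<le> p"
    and "nonarch_valuation v" and "v_complete v" and "alg_closed_field TYPE('a)"
    and "v (of_nat p) = 1"
    and "\<And>x. pp x \<noteq> 0" and "\<And>x. v (pp x) = x"
    and "\<And>x y. pp (x + y) = pp x * pp y" and "pp 1 = of_nat p"
    and "primitive_root (2 * (p - 1)) \<zeta>"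
    and "\<And>m. 1 \<le> m \<Longrightarrow> primitive_root (p ^ m) (zp m)"
    and "\<And>m. 1 \<le> m \<Longrightarrow> zp (Suc m) ^ p = zp m"
    and "\<And>m. 1 \<le> m \<Longrightarrow> \<sigma> m = pp (- 1 / of_nat p ^ m) + \<sigma> (Suc m)"
    and "\<And>m. 1 \<le> m \<Longrightarrow> \<sigma> m \<noteq> 0 \<and> v (\<sigma> m) = - 1 / of_nat p ^ m"
    and "\<And>m. 2 \<le> m \<Longrightarrow> zeta_expansion v pp p \<zeta> (\<sigma> m) m (zp m)"
    and "2 \<le> n"
  shows "\<exists>\<epsilon>. bigO v (2 / (of_nat p ^ n * (of_nat p - 1))) \<epsilon> \<and>
     inverse (zp (Suc n) - 1) ^ (2 * p - 2)
       = pp (- 2 / of_nat p ^ n) *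
         (1 - (-1) ^ n * \<zeta> * pp (1 / (of_nat p ^ n * (of_nat p - 1)))
            - (if p = 3 then pp (2 / (3 ^ n * 2)) * \<sigma> (Suc n) else 0)
            + \<epsilon>)"
proof -
  interpret cyclotomic_setting v pp p \<zeta>
    by unfold_locales (use assms(1-3,6-9,11) in \<open>auto simp: primitive_root_def\<close>)
  have "v (\<sigma> (Suc n)) = - 1 / of_nat p ^ Suc n"
    using assms(15)[of "Suc n"] by auto
  moreover have "zeta_expansion v pp p \<zeta> (\<sigma> (Suc n)) (Suc n) (zp (Suc n))"
    using assms(16)[of "Suc n"] assms(17) by simp
  ultimately show ?thesis
    by (rule inverse_power_zeta_minus_one[OF assms(17)])
qed

end
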